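(* For each $\beta\in(1/2,1]$ there exists $\Lambda>0$ such that on the domain $\{(\theta,\lambda):0<\theta\le\Lambda,\ 0<\lambda\le1\}\subset\mathbb{R}^2$ the system $$\mathbf{H}(\theta,\lambda)=\mathbf{C}_\beta(1,\lambda\theta^{1-\beta})^\dagger-\Gamma_\beta\theta^{2\beta-1}\int_0^1\frac{\mathbf{D}\mathbf{N}(\mathbf{H}(\theta(1-y),\lambda))}{(1-y)^{2-2\beta}}\,dy^\beta$$ has a unique solution $\mathbf{H}=(H_1,H_2)^\dagger$ in the class of vector-functions with non-negative continuous components.
   Context: $\mathbf{D}=(D_{ij})_{i,j=1}^2$ is a fixed $2\times2$ matrix with positive entries; $\Gamma_\beta=1$ if $\beta=1$ and $\Gamma_\beta=\frac{\sin\pi\beta}{\pi\beta(1-\beta)}$ if $\beta\in(0,1)$; $\mathbf{C}_\beta=\begin{pmatrix}D_{11}\beta\Gamma_\beta&D_{12}\\ D_{21}\beta\Gamma_\beta&D_{22}\end{pmatrix}$; $\mathbf{N}(\mathbf{x})=(N_1(\mathbf{x}),N_2(\mathbf{x}))^\dagger$ with $N_i(\mathbf{x})=\frac12\sum_{j,k=1}^2b^i_{jk}x_jx_k$ for fixed nonnegative finite constants $b^i_{jk}=b^i_{kj}$ (in the paper, second factorial moments of the offspring laws of a two-type branching process, and $\mathbf{D}$ the matrix built there from mean offspring numbers and mean life-lengths). *)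

theory Defs
  imports "HOL-Analysis.Analysis"
begin

definition Gam :: "real \<Rightarrow> real" where
  "Gam \<beta> = (if \<beta> = 1 then 1 else sin (pi * \<beta>) / (pi * \<beta> * (1 - \<beta>)))"

definition Cmat :: "real^2^2 \<Rightarrow> real \<Rightarrow> real^2^2" where
  "Cmat D \<beta> = (\<chi> i j. if j = 1 then D $ i $ j * \<beta> * Gam \<beta> else D $ i $ j)"

text \<open>N_i(x) = 1/2 * sum_{j,k} b^i_{jk} x_j x_k, with b i j k standing for b^i_{jk}.\<close>
definition Nvec :: "(2 \<Rightarrow> 2 \<Rightarrow> 2 \<Rightarrow> real) \<Rightarrow> real^2 \<Rightarrow> real^2" where
  "Nvec b x = (\<chi> i. (1/2) * (\<Sum>j\<in>UNIV. \<Sum>k\<in>UNIV. b i j k * x $ j * x $ k))"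

definition Dom :: "real \<Rightarrow> (real \<times> real) set" where
  "Dom \<Lambda> = {(\<theta>, l). 0 < \<theta> \<and> \<theta> \<le> \<Lambda> \<and> 0 < l \<and> l \<le> 1}"

text \<open>H solves the integral system on Dom Lambda. The Stieltjes integral
  int_0^1 f(y) d(y^beta) is written as int_0^1 f(y) * beta * y^(beta-1) dy.\<close>
definition solves :: "real^2^2 \<Rightarrow> (2 \<Rightarrow> 2 \<Rightarrow> 2 \<Rightarrow> real) \<Rightarrow> real \<Rightarrow> real \<Rightarrow>
    (real \<times> real \<Rightarrow> real^2) \<Rightarrow> bool" where
  "solves D b \<beta> \<Lambda> H \<longleftrightarrow>
     (\<forall>(\<theta>, l) \<in> Dom \<Lambda>. \<exists>I.
        ((\<lambda>y. (\<beta> * y powr (\<beta> - 1) / (1 - y) powr (2 - 2 * \<beta>)) *\<^sub>R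
                (D *v Nvec b (H (\<theta> * (1 - y), l)))) has_integral I) {0..1} \<and>
        H (\<theta>, l) = Cmat D \<beta> *v vector [1, l * \<theta> powr (1 - \<beta>)]
                      - (Gam \<beta> * \<theta> powr (2 * \<beta> - 1)) *\<^sub>R I)"

definition admissible :: "real \<Rightarrow> (real \<times> real \<Rightarrow> real^2) \<Rightarrow> bool" where
  "admissible \<Lambda> H \<longleftrightarrow> continuous_on (Dom \<Lambda>) H \<and> (\<forall>p \<in> Dom \<Lambda>. \<forall>i. 0 \<le> H p $ i)"

end

theory Submission
  imports Defs
begin

text \<open>
  Let R = (beta Gamma_beta + 1) sum_ij D_ij. The integral term is componentwise non-negative,
  so every admissible solution satisfies H <= C_beta (1, lambda theta^(1-beta)) <= R, i.e. it is
  trapped in the box [0, R]^2. On that box x |-> D N(x) is bounded and Lipschitz, the weight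
  beta y^(beta-1) (1-y)^(2 beta-2) is a Beta density (integrable because beta > 1/2), and the
  integral term carries the factor theta^(2 beta-1), which tends to 0. So for theta <= Lambda
  small the right-hand side maps the box into itself (the integral term stays below the smallest
  entry of the forcing term) and is a 1/2-contraction. Banach's fixed point theorem yields a
  solution; the contraction estimate applied to sup |H1 - H2| over the domain yields uniqueness.
\<close>

text \<open>theta powr a, but with 0^0 = 1: since 0 powr 0 = 0, theta powr (1 - beta) would be
  discontinuous at theta = 0 for beta = 1.\<close>
definition cpowr :: "real \<Rightarrow> real \<Rightarrow> real" where
  "cpowr \<theta> a = (if a = 0 then 1 else \<theta> powr a)"

lemma cpowr_eq_powr: "0 < \<theta> \<Longrightarrow> cpowr \<theta> a = \<theta> powr a"
  by (simp add: cpowr_def)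

lemma cpowr_bounds:
  assumes "0 \<le> a" "0 \<le> \<theta>" "\<theta> \<le> 1"
  shows "0 \<le> cpowr \<theta> a \<and> cpowr \<theta> a \<le> 1"
proof (cases "a = 0")
  case False
  have "\<theta> powr a \<le> 1 powr a" by (rule powr_mono2) (use assms in auto)
  then show ?thesis using False by (simp add: cpowr_def)
qed (simp add: cpowr_def)

lemma continuous_on_cpowr:
  assumes "0 \<le> a" "continuous_on S f" "\<And>x. x \<in> S \<Longrightarrow> 0 \<le> f x"
  shows "continuous_on S (\<lambda>x. cpowr (f x) a)"
proof (cases "a = 0")
  case False
  have "continuous_on S (\<lambda>x. f x powr a)"
    by (rule continuous_on_powr'[OF assms(2) continuous_on_const]) (use assms False in auto)
  then show ?thesis using False by (simp add: cpowr_def)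
qed (simp add: cpowr_def)

lemma powr_le_if_le_root_powr:
  fixes \<alpha> \<epsilon> \<theta> :: real
  assumes "0 < \<alpha>" "0 < \<epsilon>" "0 \<le> \<theta>" "\<theta> \<le> \<epsilon> powr (1 / \<alpha>)"
  shows "\<theta> powr \<alpha> \<le> \<epsilon>"
proof -
  have "\<theta> powr \<alpha> \<le> (\<epsilon> powr (1 / \<alpha>)) powr \<alpha>" by (rule powr_mono2) (use assms in auto)
  also have "\<dots> = \<epsilon>" using assms by (simp add: powr_powr)
  finally show ?thesis .
qed

lemma Gam_pos:
  assumes "0 < \<beta>" "\<beta> \<le> 1"
  shows "0 < Gam \<beta>"
proof (cases "\<beta> = 1")
  case False
  then have "\<beta> < 1" using assms by auto
  then have "0 < sin (pi * \<beta>)" by (intro sin_gt_zero) (use assms in auto)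
  with \<open>\<beta> < 1\<close> assms show ?thesis by (simp add: Gam_def)
qed (simp add: Gam_def)

section \<open>The Beta weight\<close>

text \<open>The density of d(y^beta) times (1-y)^(2 beta-2), as in the integrand of solves; division by
  zero makes it vanish at y = 1.\<close>
definition beta_weight :: "real \<Rightarrow> real \<Rightarrow> real" where
  "beta_weight \<beta> y = \<beta> * y powr (\<beta> - 1) / (1 - y) powr (2 - 2 * \<beta>)"

lemma beta_weight_nonneg: "0 \<le> \<beta> \<Longrightarrow> 0 \<le> beta_weight \<beta> y"
  by (simp add: beta_weight_def)

lemma beta_weight_integrable:
  assumes "1/2 < \<beta>"
  shows "beta_weight \<beta> integrable_on {0..1}"
proof -
  have "(\<lambda>y. \<beta> * (y powr (\<beta> - 1) * (1 - y) powr ((2 * \<beta> - 1) - 1))) integrable_on {0..1}"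
    using integrable_on_cmult_left[OF integrable_Beta'[of \<beta> "2 * \<beta> - 1"]] assms by simp
  then show ?thesis
  proof (rule integrable_spike[OF _ negligible_sing[of 1]])
    fix y :: real assume "y \<in> {0..1} - {1}"
    then have "(1 - y) powr ((2 * \<beta> - 1) - 1) = 1 / (1 - y) powr (2 - 2 * \<beta>)"
      by (simp add: powr_minus_divide[symmetric] algebra_simps)
    then show "beta_weight \<beta> y = \<beta> * (y powr (\<beta> - 1) * (1 - y) powr ((2 * \<beta> - 1) - 1))"
      by (simp add: beta_weight_def)
  qed
qed

lemma weighted_integrable:
  fixes V :: "real \<Rightarrow> 'a::euclidean_space"
  assumes "1/2 < \<beta>" "continuous_on {0..1} V" "bounded (V ` {0..1})"
  shows "(\<lambda>y. beta_weight \<beta> y *\<^sub>R V y) integrable_on {0..1}"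
proof -
  have bil: "bilinear (\<lambda>(v::'a) (a::real). a *\<^sub>R v)"
    unfolding bilinear_def linear_iff by (simp add: algebra_simps)
  have meas: "V \<in> borel_measurable (lebesgue_on {0..1})"
    by (rule continuous_imp_measurable_on_sets_lebesgue[OF assms(2)]) auto
  have "beta_weight \<beta> absolutely_integrable_on {0..1}"
    using beta_weight_integrable[OF assms(1)] assms(1) beta_weight_nonneg[of \<beta>]
    by (subst absolutely_integrable_on_iff_nonneg) auto
  from absolutely_integrable_bounded_measurable_product[OF bil meas _ assms(3) this]
  have "(\<lambda>y. beta_weight \<beta> y *\<^sub>R V y) absolutely_integrable_on {0..1}"
    by simp
  then show ?thesis using set_lebesgue_integral_eq_integral(1) by blast
qed

lemma norm_weighted_integral_le:
  fixes V :: "real \<Rightarrow> 'a::euclidean_space"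
  assumes "1/2 < \<beta>" "(\<lambda>y. beta_weight \<beta> y *\<^sub>R V y) integrable_on {0..1}"
    and "\<And>y. y \<in> {0..<1} \<Longrightarrow> norm (V y) \<le> B"
  shows "norm (integral {0..1} (\<lambda>y. beta_weight \<beta> y *\<^sub>R V y))
           \<le> integral {0..1} (beta_weight \<beta>) * B"
proof -
  have "norm (integral {0..1} (\<lambda>y. beta_weight \<beta> y *\<^sub>R V y))
          \<le> integral {0..1} (\<lambda>y. beta_weight \<beta> y * B)"
  proof (rule integral_norm_bound_integral[OF assms(2)])
    show "(\<lambda>y. beta_weight \<beta> y * B) integrable_on {0..1}"
      using integrable_on_cmult_right[OF beta_weight_integrable[OF assms(1)]] by simp
    show "norm (beta_weight \<beta> y *\<^sub>R V y) \<le> beta_weight \<beta> y * B" if "y \<in> {0..1}" for y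
    proof (cases "y = 1")
      case False
      then have "norm (V y) \<le> B" using that assms(3) by simp
      then show ?thesis using beta_weight_nonneg[of \<beta> y] assms(1) by (simp add: mult_left_mono)
    qed (simp add: beta_weight_def)
  qed
  then show ?thesis by simp
qed

lemma weighted_integral_component_nonneg:
  fixes V :: "real \<Rightarrow> real^'n"
  assumes "0 \<le> \<beta>" "(\<lambda>y. beta_weight \<beta> y *\<^sub>R V y) integrable_on {0..1}"
    and "\<And>y. y \<in> {0..<1} \<Longrightarrow> 0 \<le> V y $ i"
  shows "0 \<le> integral {0..1} (\<lambda>y. beta_weight \<beta> y *\<^sub>R V y) $ i"
proof -
  have "0 \<le> integral {0..1} (\<lambda>y. (beta_weight \<beta> y *\<^sub>R V y) $ i)"
  proof (rule integral_nonneg)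
    show "(\<lambda>y. (beta_weight \<beta> y *\<^sub>R V y) $ i) integrable_on {0..1}"
      using integrable_linear[OF assms(2) bounded_linear_vec_nth[of i]] by (simp add: o_def)
    show "0 \<le> (beta_weight \<beta> y *\<^sub>R V y) $ i" if "y \<in> {0..1}" for y
    proof (cases "y = 1")
      case False
      then have "0 \<le> V y $ i" using that assms(3) by simp
      then show ?thesis using beta_weight_nonneg[of \<beta> y] assms(1) by simp
    qed (simp add: beta_weight_def)
  qed
  also have "\<dots> = integral {0..1} (\<lambda>y. beta_weight \<beta> y *\<^sub>R V y) $ i"
    by (rule integral_component_eq_cart[OF assms(2)])
  finally show ?thesis .
qed

lemma continuous_on_weighted_integral:
  fixes F :: "'a::{first_countable_topology, t2_space} \<Rightarrow> real \<Rightarrow> 'b::euclidean_space"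
  assumes "1/2 < \<beta>"
    and "\<And>y. y \<in> {0..1} \<Longrightarrow> continuous_on S (\<lambda>z. F z y)"
    and "\<And>z. z \<in> S \<Longrightarrow> continuous_on {0..1} (F z)"
    and "\<And>z y. z \<in> S \<Longrightarrow> y \<in> {0..1} \<Longrightarrow> norm (F z y) \<le> B"
  shows "continuous_on S (\<lambda>z. integral {0..1} (\<lambda>y. beta_weight \<beta> y *\<^sub>R F z y))"
proof (rule continuous_on_sequentiallyI)
  fix u a assume u: "\<forall>n. u n \<in> S" and a: "a \<in> S" and lim: "u \<longlonglongrightarrow> a"
  show "(\<lambda>n. integral {0..1} (\<lambda>y. beta_weight \<beta> y *\<^sub>R F (u n) y))
          \<longlonglongrightarrow> integral {0..1} (\<lambda>y. beta_weight \<beta> y *\<^sub>R F a y)"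
  proof (rule dominated_convergence(2))
    show "(\<lambda>y. beta_weight \<beta> y *\<^sub>R F (u n) y) integrable_on {0..1}" for n
    proof (rule weighted_integrable[OF assms(1) assms(3)[OF u[rule_format]]])
      show "bounded (F (u n) ` {0..1})"
        unfolding bounded_iff using u assms(4) by (intro exI[of _ B]) auto
    qed
    show "(\<lambda>y. beta_weight \<beta> y * B) integrable_on {0..1}"
      using integrable_on_cmult_right[OF beta_weight_integrable[OF assms(1)]] by simp
    show "norm (beta_weight \<beta> y *\<^sub>R F (u n) y) \<le> beta_weight \<beta> y * B" if "y \<in> {0..1}" for n y
    proof -
      have "norm (F (u n) y) \<le> B" using assms(4)[OF _ that] u by simp
      then show ?thesis using assms(1) beta_weight_nonneg[of \<beta> y] by (simp add: mult_left_mono)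
    qed
    show "(\<lambda>n. beta_weight \<beta> y *\<^sub>R F (u n) y) \<longlonglongrightarrow> beta_weight \<beta> y *\<^sub>R F a y"
      if "y \<in> {0..1}" for y
    proof (intro tendsto_scaleR tendsto_const)
      have "\<forall>\<^sub>F n in sequentially. u n \<in> S" using u by (simp add: always_eventually)
      then show "(\<lambda>n. F (u n) y) \<longlonglongrightarrow> F a y"
        by (rule continuous_on_tendsto_compose[OF assms(2)[OF that] lim a])
    qed
  qed
qed

section \<open>The quadratic nonlinearity\<close>

definition DN :: "real^2^2 \<Rightarrow> (2 \<Rightarrow> 2 \<Rightarrow> 2 \<Rightarrow> real) \<Rightarrow> real^2 \<Rightarrow> real^2" where
  "DN D b x = D *v Nvec b x"

lemma DN_zero [simp]: "DN D b 0 = 0"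
  by (simp add: DN_def Nvec_def vec_eq_iff matrix_vector_mult_def)

lemma DN_nonneg:
  assumes "\<And>i j. 0 \<le> D $ i $ j" "\<And>i j k. 0 \<le> b i j k" "\<And>i. 0 \<le> x $ i"
  shows "0 \<le> DN D b x $ i"
  using assms
  by (auto simp: DN_def Nvec_def matrix_vector_mult_def intro!: sum_nonneg mult_nonneg_nonneg)

lemma continuous_on_DN:
  assumes "continuous_on S f"
  shows "continuous_on S (\<lambda>x. DN D b (f x))"
proof -
  have "continuous_on S (\<lambda>x. Nvec b (f x))"
    unfolding Nvec_def using assms
    by (intro continuous_intros continuous_on_vec_lambda)
       (auto intro: continuous_on_compose2[OF linear_continuous_on[OF bounded_linear_vec_nth]])
  then show ?thesis unfolding DN_def
    by (rule continuous_on_compose2[OF linear_continuous_on[OF matrix_vector_mul_bounded_linear]]) auto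
qed

lemma norm_matrix_vector_mult_le:
  fixes D :: "real^'n^'m"
  shows "norm (D *v z) \<le> (\<Sum>i\<in>UNIV. \<Sum>j\<in>UNIV. \<bar>D $ i $ j\<bar>) * norm z"
proof -
  have "norm (D *v z) \<le> (\<Sum>i\<in>UNIV. \<bar>(D *v z) $ i\<bar>)" by (rule norm_le_l1_cart)
  also have "\<dots> \<le> (\<Sum>i\<in>UNIV. \<Sum>j\<in>UNIV. \<bar>D $ i $ j\<bar> * norm z)"
    unfolding matrix_vector_mult_def
    by (intro sum_mono, simp, rule order_trans[OF sum_abs], rule sum_mono)
       (auto simp: abs_mult intro: mult_left_mono component_le_norm_cart)
  finally show ?thesis by (simp add: sum_distrib_right)
qed

lemma abs_mult_component_diff_le:
  fixes x y :: "real^'n"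
  assumes "norm x \<le> A" "norm y \<le> A"
  shows "\<bar>x $ j * x $ k - y $ j * y $ k\<bar> \<le> 2 * A * norm (x - y)"
proof -
  have "x $ j * x $ k - y $ j * y $ k = x $ j * (x - y) $ k + y $ k * (x - y) $ j"
    by (simp add: algebra_simps)
  moreover have "\<bar>x $ j * (x - y) $ k\<bar> \<le> A * norm (x - y)"
    unfolding abs_mult using assms component_le_norm_cart[of x j] component_le_norm_cart[of "x - y" k]
    by (intro mult_mono) auto
  moreover have "\<bar>y $ k * (x - y) $ j\<bar> \<le> A * norm (x - y)"
    unfolding abs_mult using assms component_le_norm_cart[of y k] component_le_norm_cart[of "x - y" j]
    by (intro mult_mono) auto
  ultimately show ?thesis by linarith
qed

lemma norm_Nvec_diff_le:
  assumes "norm x \<le> A" "norm y \<le> A"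
  shows "norm (Nvec b x - Nvec b y)
           \<le> (\<Sum>i\<in>UNIV. \<Sum>j\<in>UNIV. \<Sum>k\<in>UNIV. \<bar>b i j k\<bar>) * A * norm (x - y)"
proof -
  have "\<bar>Nvec b x $ i - Nvec b y $ i\<bar> \<le> (\<Sum>j\<in>UNIV. \<Sum>k\<in>UNIV. \<bar>b i j k\<bar>) * A * norm (x - y)"
    for i
  proof -
    have "Nvec b x $ i - Nvec b y $ i
            = (1/2) * (\<Sum>j\<in>UNIV. \<Sum>k\<in>UNIV. b i j k * (x $ j * x $ k - y $ j * y $ k))"
      by (simp add: Nvec_def sum_subtractf[symmetric] algebra_simps)
    also have "\<bar>\<dots>\<bar> \<le> (1/2) * (\<Sum>j\<in>UNIV. \<Sum>k\<in>UNIV. \<bar>b i j k\<bar> * (2 * A * norm (x - y)))"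
    proof -
      have "\<bar>\<Sum>j\<in>UNIV. \<Sum>k\<in>UNIV. b i j k * (x $ j * x $ k - y $ j * y $ k)\<bar>
              \<le> (\<Sum>j\<in>UNIV. \<Sum>k\<in>UNIV. \<bar>b i j k\<bar> * (2 * A * norm (x - y)))"
        by (rule order_trans[OF sum_abs], rule sum_mono, rule order_trans[OF sum_abs], rule sum_mono)
           (auto simp: abs_mult intro: mult_left_mono abs_mult_component_diff_le[OF assms])
      then show ?thesis by (simp add: abs_mult)
    qed
    finally show ?thesis by (simp add: sum_distrib_right sum_distrib_left algebra_simps)
  qed
  then have "(\<Sum>i\<in>UNIV. \<bar>(Nvec b x - Nvec b y) $ i\<bar>)
               \<le> (\<Sum>i\<in>UNIV. (\<Sum>j\<in>UNIV. \<Sum>k\<in>UNIV. \<bar>b i j k\<bar>) * A * norm (x - y))"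
    by (intro sum_mono) simp
  with norm_le_l1_cart[of "Nvec b x - Nvec b y"] show ?thesis
    by (simp add: sum_distrib_right)
qed

lemma norm_DN_diff_le:
  assumes "norm x \<le> A" "norm y \<le> A"
  shows "norm (DN D b x - DN D b y)
           \<le> (\<Sum>i\<in>UNIV. \<Sum>j\<in>UNIV. \<bar>D $ i $ j\<bar>)
             * ((\<Sum>i\<in>UNIV. \<Sum>j\<in>UNIV. \<Sum>k\<in>UNIV. \<bar>b i j k\<bar>) * A) * norm (x - y)"
proof -
  have "norm (DN D b x - DN D b y) = norm (D *v (Nvec b x - Nvec b y))"
    by (simp add: DN_def matrix_vector_mult_diff_distrib)
  also have "\<dots> \<le> (\<Sum>i\<in>UNIV. \<Sum>j\<in>UNIV. \<bar>D $ i $ j\<bar>) * norm (Nvec b x - Nvec b y)"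
    by (rule norm_matrix_vector_mult_le)
  also have "\<dots> \<le> (\<Sum>i\<in>UNIV. \<Sum>j\<in>UNIV. \<bar>D $ i $ j\<bar>)
                   * ((\<Sum>i\<in>UNIV. \<Sum>j\<in>UNIV. \<Sum>k\<in>UNIV. \<bar>b i j k\<bar>) * A * norm (x - y))"
    by (intro mult_left_mono norm_Nvec_diff_le[OF assms]) (auto intro: sum_nonneg)
  finally show ?thesis by (simp add: mult.assoc)
qed

section \<open>The system as a fixed-point problem\<close>

lemma Dom_segment:
  assumes "(\<theta>, l) \<in> Dom \<Lambda>" "0 \<le> y" "y < 1"
  shows "(\<theta> * (1 - y), l) \<in> Dom \<Lambda>"
proof -
  from assms(1) have \<theta>: "0 < \<theta>" "\<theta> \<le> \<Lambda>" and l: "0 < l" "l \<le> 1" by (auto simp: Dom_def)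
  have "\<theta> * (1 - y) \<le> \<theta>" using \<theta>(1) assms(2) by (simp add: mult_left_le)
  then have "\<theta> * (1 - y) \<le> \<Lambda>" using \<theta>(2) by (rule order_trans)
  moreover have "0 < \<theta> * (1 - y)" using \<theta>(1) assms(3) by simp
  ultimately show ?thesis using l unfolding Dom_def by blast
qed

locale volterra_system =
  fixes D :: "real^2^2" and b :: "2 \<Rightarrow> 2 \<Rightarrow> 2 \<Rightarrow> real" and \<beta> :: real
  assumes D_pos: "\<And>i j. 0 < D $ i $ j"
    and b_nonneg: "\<And>i j k. 0 \<le> b i j k"
    and half_lt_beta: "1/2 < \<beta>"
    and beta_le_1: "\<beta> \<le> 1"
begin

definition forcing :: "real \<Rightarrow> real \<Rightarrow> real^2" where
  "forcing \<theta> l = (\<chi> i. D $ i $ 1 * \<beta> * Gam \<beta> + D $ i $ 2 * (l * cpowr \<theta> (1 - \<beta>)))"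

definition integrand :: "(real \<times> real \<Rightarrow> real^2) \<Rightarrow> real \<Rightarrow> real \<Rightarrow> real \<Rightarrow> real^2" where
  "integrand H \<theta> l y = beta_weight \<beta> y *\<^sub>R DN D b (H (\<theta> * (1 - y), l))"

definition rhs :: "(real \<times> real \<Rightarrow> real^2) \<Rightarrow> real \<Rightarrow> real \<Rightarrow> real^2" where
  "rhs H \<theta> l = forcing \<theta> l - (Gam \<beta> * \<theta> powr (2 * \<beta> - 1)) *\<^sub>R integral {0..1} (integrand H \<theta> l)"

definition D_l1 :: real where "D_l1 = (\<Sum>i\<in>UNIV. \<Sum>j\<in>UNIV. \<bar>D $ i $ j\<bar>)"

definition b_l1 :: real where "b_l1 = (\<Sum>i\<in>UNIV. \<Sum>j\<in>UNIV. \<Sum>k\<in>UNIV. \<bar>b i j k\<bar>)"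

definition forcing_max :: real where "forcing_max = (\<beta> * Gam \<beta> + 1) * D_l1"

definition forcing_min :: real where "forcing_min = \<beta> * Gam \<beta> * min (D $ 1 $ 1) (D $ 2 $ 1)"

definition trap :: "(real^2) set" where "trap = cbox 0 (vec forcing_max)"

definition lip_DN :: real where "lip_DN = D_l1 * (b_l1 * (2 * forcing_max))"

definition lip_rhs :: "real \<Rightarrow> real" where
  "lip_rhs \<theta> = Gam \<beta> * \<theta> powr (2 * \<beta> - 1) * integral {0..1} (beta_weight \<beta>) * lip_DN"

lemma Gam_beta_pos: "0 < Gam \<beta>"
  using Gam_pos half_lt_beta beta_le_1 by simp

lemma D_le_D_l1: "D $ i $ j \<le> D_l1"
proof -
  have "\<bar>D $ i $ j\<bar> \<le> (\<Sum>j\<in>UNIV. \<bar>D $ i $ j\<bar>)" by (rule member_le_sum) auto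
  also have "\<dots> \<le> D_l1"
    unfolding D_l1_def by (rule member_le_sum) (auto intro: sum_nonneg)
  finally show ?thesis by simp
qed

lemma forcing_min_pos: "0 < forcing_min"
  using Gam_beta_pos half_lt_beta D_pos by (simp add: forcing_min_def)

lemma forcing_max_pos: "0 < forcing_max"
proof -
  have "0 < D_l1" using D_le_D_l1[of 1 1] D_pos[of 1 1] by simp
  moreover have "0 < \<beta> * Gam \<beta>" using Gam_beta_pos half_lt_beta by (intro mult_pos_pos) auto
  ultimately show ?thesis by (simp add: forcing_max_def)
qed

lemma lip_DN_nonneg: "0 \<le> lip_DN"
  using forcing_max_pos by (simp add: lip_DN_def D_l1_def b_l1_def sum_nonneg)

lemma integral_beta_weight_nonneg: "0 \<le> integral {0..1} (beta_weight \<beta>)"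
  using beta_weight_integrable[OF half_lt_beta] beta_weight_nonneg half_lt_beta
  by (intro integral_nonneg) auto

lemma forcing_bounds:
  assumes "0 \<le> \<theta>" "\<theta> \<le> 1" "0 \<le> l" "l \<le> 1"
  shows "forcing_min \<le> forcing \<theta> l $ i" "forcing \<theta> l $ i \<le> forcing_max"
proof -
  have t: "0 \<le> l * cpowr \<theta> (1 - \<beta>)" "l * cpowr \<theta> (1 - \<beta>) \<le> 1"
    using cpowr_bounds[of "1 - \<beta>" \<theta>] assms beta_le_1 by (auto intro: mult_le_one)
  have "forcing_min \<le> D $ i $ 1 * \<beta> * Gam \<beta>"
    using exhaust_2[of i] half_lt_beta Gam_beta_pos by (auto simp: forcing_min_def)
  moreover have "0 \<le> D $ i $ 2 * (l * cpowr \<theta> (1 - \<beta>))"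
    using t D_pos[of i 2] by simp
  ultimately show "forcing_min \<le> forcing \<theta> l $ i" by (simp add: forcing_def)
  have "D $ i $ 1 * \<beta> * Gam \<beta> \<le> D_l1 * \<beta> * Gam \<beta>"
    using D_le_D_l1 half_lt_beta Gam_beta_pos by (intro mult_right_mono) auto
  moreover have "D $ i $ 2 * (l * cpowr \<theta> (1 - \<beta>)) \<le> D_l1 * 1"
    using t D_le_D_l1[of i 2] D_pos[of i 2] by (intro mult_mono) auto
  ultimately show "forcing \<theta> l $ i \<le> forcing_max"
    by (simp add: forcing_def forcing_max_def algebra_simps)
qed

lemma forcing_eq_Cmat:
  assumes "0 < \<theta>"
  shows "forcing \<theta> l = Cmat D \<beta> *v vector [1, l * \<theta> powr (1 - \<beta>)]"
  using assms
  by (simp add: vec_eq_iff forcing_def cpowr_eq_powr Cmat_def matrix_vector_mult_def sum_2)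

lemma continuous_on_forcing: "continuous_on ({0..} \<times> UNIV) (\<lambda>(\<theta>, l). forcing \<theta> l)"
proof -
  have "continuous_on ({0..} \<times> UNIV) (\<lambda>p. cpowr (fst p) (1 - \<beta>) :: real)"
    using beta_le_1 by (intro continuous_on_cpowr continuous_intros) auto
  then show ?thesis
    unfolding forcing_def case_prod_unfold
    by (intro continuous_on_vec_lambda continuous_intros)
qed

lemma mem_trap: "x \<in> trap \<longleftrightarrow> (\<forall>i. 0 \<le> x $ i \<and> x $ i \<le> forcing_max)"
  by (simp add: trap_def mem_box_cart)

lemma norm_le_if_mem_trap: "x \<in> trap \<Longrightarrow> norm x \<le> 2 * forcing_max"
  using norm_le_l1_cart[of x] mem_trap[of x] by (simp add: sum_2) (smt (verit))

lemma DN_lipschitz_on_trap: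
  "x \<in> trap \<Longrightarrow> y \<in> trap \<Longrightarrow> norm (DN D b x - DN D b y) \<le> lip_DN * norm (x - y)"
  using norm_DN_diff_le[OF norm_le_if_mem_trap norm_le_if_mem_trap, of x y D b]
  by (simp add: lip_DN_def D_l1_def b_l1_def)

lemma norm_DN_le_on_trap: "x \<in> trap \<Longrightarrow> norm (DN D b x) \<le> lip_DN * (2 * forcing_max)"
proof -
  assume x: "x \<in> trap"
  have "0 \<in> trap" using forcing_max_pos by (simp add: mem_trap)
  with x have "norm (DN D b x) \<le> lip_DN * norm x" using DN_lipschitz_on_trap by fastforce
  also have "\<dots> \<le> lip_DN * (2 * forcing_max)"
    by (rule mult_left_mono[OF norm_le_if_mem_trap[OF x] lip_DN_nonneg])
  finally show ?thesis .
qed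

lemma integrand_integrable:
  assumes "continuous_on UNIV H" "\<And>p. H p \<in> trap"
  shows "integrand H \<theta> l integrable_on {0..1}"
  unfolding integrand_def
proof (rule weighted_integrable[OF half_lt_beta])
  show "continuous_on {0..1} (\<lambda>y. DN D b (H (\<theta> * (1 - y), l)))"
    by (intro continuous_on_DN continuous_on_compose2[OF assms(1)] continuous_intros) auto
  show "bounded ((\<lambda>y. DN D b (H (\<theta> * (1 - y), l))) ` {0..1})"
    unfolding bounded_iff using norm_DN_le_on_trap[OF assms(2)] by blast
qed

lemma continuous_on_rhs:
  assumes "continuous_on UNIV H" "\<And>p. H p \<in> trap"
  shows "continuous_on ({0..} \<times> UNIV) (\<lambda>(\<theta>, l). rhs H \<theta> l)"
proof -
  have H_comp: "continuous_on S (\<lambda>z. H (f z))" if "continuous_on S f" for S and f :: "_ \<Rightarrow> real \<times> real"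
    by (rule continuous_on_compose2[OF assms(1) that]) auto
  have I: "continuous_on ({0..} \<times> UNIV) (\<lambda>z. integral {0..1} (integrand H (fst z) (snd z)))"
    unfolding integrand_def
  proof (rule continuous_on_weighted_integral[OF half_lt_beta])
    show "continuous_on ({0..} \<times> UNIV) (\<lambda>z. DN D b (H (fst z * (1 - y), snd z)))" for y
      by (intro continuous_on_DN H_comp continuous_intros)
    show "continuous_on {0..1} (\<lambda>y. DN D b (H (fst z * (1 - y), snd z)))" for z
      by (intro continuous_on_DN H_comp continuous_intros)
    show "norm (DN D b (H (fst z * (1 - y), snd z))) \<le> lip_DN * (2 * forcing_max)" for z y
      by (rule norm_DN_le_on_trap[OF assms(2)])
  qed
  have P: "continuous_on ({0..} \<times> UNIV) (\<lambda>z. fst z powr (2 * \<beta> - 1) :: real)"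
    using half_lt_beta by (intro continuous_on_powr' continuous_intros) auto
  show ?thesis
    using continuous_on_forcing unfolding rhs_def case_prod_unfold
    by (intro continuous_on_diff continuous_on_scaleR continuous_on_mult_left I P)
qed

lemma exists_small_domain:
  obtains \<Lambda> where "0 < \<Lambda>" "\<Lambda> \<le> 1"
    and "\<And>\<theta>. 0 \<le> \<theta> \<Longrightarrow> \<theta> \<le> \<Lambda> \<Longrightarrow> lip_rhs \<theta> \<le> 1/2"
    and "\<And>\<theta>. 0 \<le> \<theta> \<Longrightarrow> \<theta> \<le> \<Lambda> \<Longrightarrow> lip_rhs \<theta> * (2 * forcing_max) \<le> forcing_min"
proof -
  define c where "c = min (1/2) (forcing_min / (2 * forcing_max))"
  define L where "L = Gam \<beta> * integral {0..1} (beta_weight \<beta>) * lip_DN"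
  define \<epsilon> where "\<epsilon> = c / (L + 1)"
  have c: "0 < c" using forcing_min_pos forcing_max_pos by (simp add: c_def)
  have L: "0 \<le> L"
    using Gam_beta_pos integral_beta_weight_nonneg lip_DN_nonneg by (simp add: L_def)
  have \<epsilon>: "0 < \<epsilon>" using c L by (simp add: \<epsilon>_def)
  have small: "lip_rhs \<theta> \<le> c" if "0 \<le> \<theta>" "\<theta> \<le> \<epsilon> powr (1 / (2 * \<beta> - 1))" for \<theta>
  proof -
    have "\<theta> powr (2 * \<beta> - 1) \<le> \<epsilon>"
      by (rule powr_le_if_le_root_powr) (use half_lt_beta \<epsilon> that in auto)
    moreover have "lip_rhs \<theta> = L * \<theta> powr (2 * \<beta> - 1)"
      by (simp add: lip_rhs_def L_def algebra_simps)
    ultimately have "lip_rhs \<theta> \<le> L * \<epsilon>"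
      using L by (simp add: mult_left_mono)
    also have "\<dots> \<le> c" using c L by (simp add: \<epsilon>_def field_simps)
    finally show ?thesis .
  qed
  show ?thesis
  proof
    show "0 < min 1 (\<epsilon> powr (1 / (2 * \<beta> - 1)))" using \<epsilon> by simp
    show "lip_rhs \<theta> \<le> 1/2" "lip_rhs \<theta> * (2 * forcing_max) \<le> forcing_min"
      if "0 \<le> \<theta>" "\<theta> \<le> min 1 (\<epsilon> powr (1 / (2 * \<beta> - 1)))" for \<theta>
      using small[OF that(1)] that forcing_max_pos by (auto simp: c_def field_simps)
  qed simp
qed

lemma solves_iff_fixed_point:
  "solves D b \<beta> \<Lambda> H \<longleftrightarrow>
     (\<forall>(\<theta>, l) \<in> Dom \<Lambda>. integrand H \<theta> l integrable_on {0..1} \<and> H (\<theta>, l) = rhs H \<theta> l)"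
proof -
  have "integrand H \<theta> l = (\<lambda>y. (\<beta> * y powr (\<beta> - 1) / (1 - y) powr (2 - 2 * \<beta>)) *\<^sub>R
                              (D *v Nvec b (H (\<theta> * (1 - y), l))))" for \<theta> l
    by (simp add: fun_eq_iff integrand_def beta_weight_def DN_def)
  moreover have "0 < \<theta>" if "(\<theta>, l) \<in> Dom \<Lambda>" for \<theta> l
    using that by (simp add: Dom_def)
  ultimately show ?thesis
    unfolding solves_def rhs_def
    by (auto simp: has_integral_integrable_integral forcing_eq_Cmat)
qed

lemma rhs_component_le_forcing_max:
  assumes "0 \<le> \<theta>" "\<theta> \<le> 1" "0 \<le> l" "l \<le> 1" "integrand G \<theta> l integrable_on {0..1}"
    and "\<And>y j. 0 \<le> y \<Longrightarrow> y < 1 \<Longrightarrow> 0 \<le> G (\<theta> * (1 - y), l) $ j"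
  shows "rhs G \<theta> l $ i \<le> forcing_max"
proof -
  have "0 \<le> integral {0..1} (integrand G \<theta> l) $ i"
    unfolding integrand_def
    by (rule weighted_integral_component_nonneg[OF _ assms(5)[unfolded integrand_def]])
       (use half_lt_beta assms(6) in \<open>auto intro!: DN_nonneg b_nonneg less_imp_le[OF D_pos]\<close>)
  moreover have "0 \<le> Gam \<beta> * \<theta> powr (2 * \<beta> - 1)" using Gam_beta_pos by simp
  ultimately have "rhs G \<theta> l $ i \<le> forcing \<theta> l $ i" by (simp add: rhs_def)
  also have "\<dots> \<le> forcing_max" by (rule forcing_bounds[OF assms(1-4)])
  finally show ?thesis .
qed

end

section \<open>Contraction on a small domain\<close>

locale volterra_small = volterra_system +
  fixes \<Lambda> :: real
  assumes Lambda_pos: "0 < \<Lambda>" and Lambda_le_1: "\<Lambda> \<le> 1"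
    and lip_rhs_le_half: "\<And>\<theta>. 0 \<le> \<theta> \<Longrightarrow> \<theta> \<le> \<Lambda> \<Longrightarrow> lip_rhs \<theta> \<le> 1/2"
    \<comment> \<open>Norms on trap are at most 2 forcing_max, so this keeps the right-hand side non-negative.\<close>
    and lip_rhs_le_forcing_min:
      "\<And>\<theta>. 0 \<le> \<theta> \<Longrightarrow> \<theta> \<le> \<Lambda> \<Longrightarrow> lip_rhs \<theta> * (2 * forcing_max) \<le> forcing_min"
begin

lemma rhs_component_nonneg:
  assumes "0 \<le> \<theta>" "\<theta> \<le> \<Lambda>" "0 \<le> l" "l \<le> 1" "integrand G \<theta> l integrable_on {0..1}"
    and "\<And>y. 0 \<le> y \<Longrightarrow> y < 1 \<Longrightarrow> G (\<theta> * (1 - y), l) \<in> trap"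
  shows "0 \<le> rhs G \<theta> l $ i"
proof -
  let ?I = "integral {0..1} (integrand G \<theta> l)"
  have "norm ?I \<le> integral {0..1} (beta_weight \<beta>) * (lip_DN * (2 * forcing_max))"
    using assms(5) unfolding integrand_def
    by (rule norm_weighted_integral_le[OF half_lt_beta]) (use assms(6) norm_DN_le_on_trap in auto)
  then have "?I $ i \<le> integral {0..1} (beta_weight \<beta>) * (lip_DN * (2 * forcing_max))"
    using component_le_norm_cart[of ?I i] by linarith
  then have "(Gam \<beta> * \<theta> powr (2 * \<beta> - 1)) * ?I $ i
               \<le> (Gam \<beta> * \<theta> powr (2 * \<beta> - 1)) * (integral {0..1} (beta_weight \<beta>) * (lip_DN * (2 * forcing_max)))"
    using Gam_beta_pos by (intro mult_left_mono) auto
  also have "\<dots> = lip_rhs \<theta> * (2 * forcing_max)" by (simp add: lip_rhs_def algebra_simps)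
  also have "\<dots> \<le> forcing_min" by (rule lip_rhs_le_forcing_min[OF assms(1,2)])
  also have "\<dots> \<le> forcing \<theta> l $ i"
    using assms Lambda_le_1 by (intro forcing_bounds) auto
  finally show ?thesis by (simp add: rhs_def)
qed

lemma norm_rhs_diff_le:
  assumes "0 \<le> \<theta>" "\<theta> \<le> \<Lambda>"
    and int: "integrand G1 \<theta> l integrable_on {0..1}" "integrand G2 \<theta> l integrable_on {0..1}"
    and trap: "\<And>y. 0 \<le> y \<Longrightarrow> y < 1 \<Longrightarrow> G1 (\<theta> * (1 - y), l) \<in> trap"
      "\<And>y. 0 \<le> y \<Longrightarrow> y < 1 \<Longrightarrow> G2 (\<theta> * (1 - y), l) \<in> trap"
    and dist: "\<And>y. 0 \<le> y \<Longrightarrow> y < 1 \<Longrightarrow> norm (G1 (\<theta> * (1 - y), l) - G2 (\<theta> * (1 - y), l)) \<le> d"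
  shows "norm (rhs G1 \<theta> l - rhs G2 \<theta> l) \<le> d / 2"
proof -
  let ?\<Delta> = "\<lambda>y. DN D b (G1 (\<theta> * (1 - y), l)) - DN D b (G2 (\<theta> * (1 - y), l))"
  have d: "0 \<le> d" using order_trans[OF norm_ge_zero dist[of 0]] by simp
  have I: "integral {0..1} (integrand G1 \<theta> l) - integral {0..1} (integrand G2 \<theta> l)
             = integral {0..1} (\<lambda>y. beta_weight \<beta> y *\<^sub>R ?\<Delta> y)"
    by (subst integral_diff[OF int, symmetric]) (simp add: integrand_def scaleR_diff_right)
  have "(\<lambda>y. beta_weight \<beta> y *\<^sub>R ?\<Delta> y) integrable_on {0..1}"
    using integrable_diff[OF int] by (simp add: integrand_def scaleR_diff_right)
  then have "norm (integral {0..1} (\<lambda>y. beta_weight \<beta> y *\<^sub>R ?\<Delta> y))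
               \<le> integral {0..1} (beta_weight \<beta>) * (lip_DN * d)"
  proof (rule norm_weighted_integral_le[OF half_lt_beta])
    fix y :: real assume "y \<in> {0..<1}"
    then show "norm (?\<Delta> y) \<le> lip_DN * d"
      using DN_lipschitz_on_trap[OF trap] dist mult_left_mono[OF _ lip_DN_nonneg]
      by (meson atLeastLessThan_iff order_trans)
  qed
  moreover have "rhs G1 \<theta> l - rhs G2 \<theta> l
      = (Gam \<beta> * \<theta> powr (2 * \<beta> - 1)) *\<^sub>R (integral {0..1} (integrand G2 \<theta> l) - integral {0..1} (integrand G1 \<theta> l))"
    by (simp add: rhs_def scaleR_diff_right)
  ultimately have "norm (rhs G1 \<theta> l - rhs G2 \<theta> l)
                     \<le> (Gam \<beta> * \<theta> powr (2 * \<beta> - 1)) * (integral {0..1} (beta_weight \<beta>) * (lip_DN * d))"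
    using Gam_beta_pos I by (simp add: norm_minus_commute mult_left_mono)
  also have "\<dots> = lip_rhs \<theta> * d" by (simp add: lip_rhs_def algebra_simps)
  also have "\<dots> \<le> 1/2 * d" by (rule mult_right_mono[OF lip_rhs_le_half[OF assms(1,2)] d])
  finally show ?thesis by simp
qed

text \<open>Clamping (theta, lambda) to [0, Lambda] x [0, 1] extends the right-hand side to the whole
  plane, so that it acts on the complete space of bounded continuous functions.\<close>
definition rhs_ext :: "(real \<times> real \<Rightarrow> real^2) \<Rightarrow> real \<times> real \<Rightarrow> real^2" where
  "rhs_ext G p = (case clamp (0, 0) (\<Lambda>, 1) p of (\<theta>, l) \<Rightarrow> rhs G \<theta> l)"

lemma clamp_mem_box: "clamp (0, 0) (\<Lambda>, 1) (p :: real \<times> real) \<in> {0..\<Lambda>} \<times> {0..1}"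
proof -
  have "(0::real, 0::real) \<bullet> i \<le> (\<Lambda>, 1) \<bullet> i" if "i \<in> Basis" for i
    using Lambda_pos that by (auto simp: Basis_prod_def)
  from clamp_in_interval[OF this, of p] show ?thesis by (simp add: cbox_Pair_eq)
qed

lemma rhs_ext_eq:
  assumes "0 \<le> \<theta>" "\<theta> \<le> \<Lambda>" "0 \<le> l" "l \<le> 1"
  shows "rhs_ext G (\<theta>, l) = rhs G \<theta> l"
  using assms by (simp add: rhs_ext_def cbox_Pair_eq)

lemma rhs_ext_in_trap:
  assumes "continuous_on UNIV G" "\<And>p. G p \<in> trap"
  shows "rhs_ext G p \<in> trap"
proof -
  obtain \<theta> l where p: "clamp (0, 0) (\<Lambda>, 1) p = (\<theta>, l)" by fastforce
  then have bounds: "0 \<le> \<theta>" "\<theta> \<le> \<Lambda>" "0 \<le> l" "l \<le> 1" using clamp_mem_box[of p] by auto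
  have int: "integrand G \<theta> l integrable_on {0..1}" by (rule integrand_integrable[OF assms])
  have "0 \<le> rhs G \<theta> l $ i" for i by (rule rhs_component_nonneg[OF bounds int assms(2)])
  moreover have "rhs G \<theta> l $ i \<le> forcing_max" for i
    by (rule rhs_component_le_forcing_max[OF bounds(1) _ bounds(3,4) int])
       (use Lambda_le_1 bounds(2) assms(2) mem_trap in auto)
  ultimately show ?thesis by (simp add: rhs_ext_def p mem_trap)
qed

lemma continuous_on_rhs_ext:
  assumes "continuous_on UNIV G" "\<And>p. G p \<in> trap"
  shows "continuous_on UNIV (rhs_ext G)"
proof -
  have "continuous_on (cbox (0, 0) (\<Lambda>, 1)) (\<lambda>(\<theta>, l). rhs G \<theta> l)"
    by (rule continuous_on_subset[OF continuous_on_rhs[OF assms]]) (auto simp: cbox_Pair_eq)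
  then show ?thesis
    unfolding rhs_ext_def by (rule clamp_continuous_on)
qed

lemma norm_rhs_ext_diff_le:
  assumes "continuous_on UNIV G1" "\<And>p. G1 p \<in> trap" "continuous_on UNIV G2" "\<And>p. G2 p \<in> trap"
    and "\<And>q. norm (G1 q - G2 q) \<le> d"
  shows "norm (rhs_ext G1 p - rhs_ext G2 p) \<le> d / 2"
proof -
  obtain \<theta> l where p: "clamp (0, 0) (\<Lambda>, 1) p = (\<theta>, l)" by fastforce
  then have bounds: "0 \<le> \<theta>" "\<theta> \<le> \<Lambda>" using clamp_mem_box[of p] by auto
  have "norm (rhs G1 \<theta> l - rhs G2 \<theta> l) \<le> d / 2"
    by (rule norm_rhs_diff_le[OF bounds integrand_integrable[OF assms(1,2)] integrand_integrable[OF assms(3,4)]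
          assms(2) assms(4) assms(5)])
  then show ?thesis by (simp add: rhs_ext_def p)
qed

lemma exists_fixed_point:
  obtains H where "continuous_on UNIV H" "\<And>p. H p \<in> trap" "\<And>p. H p = rhs_ext H p"
proof -
  define S where "S = PiC (UNIV :: (real \<times> real) set) (\<lambda>_. trap)"
  define T where "T G = Bcontfun (rhs_ext (apply_bcontfun G))" for G
  have S: "G \<in> S \<longleftrightarrow> (\<forall>p. apply_bcontfun G p \<in> trap)" for G
    by (simp add: S_def mem_PiC_iff Pi_iff)
  have T: "apply_bcontfun (T G) = rhs_ext (apply_bcontfun G)" if "G \<in> S" for G
  proof -
    have "range (rhs_ext (apply_bcontfun G)) \<subseteq> trap"
      using rhs_ext_in_trap that S by auto
    then have "bounded (range (rhs_ext (apply_bcontfun G)))"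
      by (rule bounded_subset[rotated]) (simp add: trap_def)
    then show ?thesis
      using continuous_on_rhs_ext that S unfolding T_def
      by (intro Bcontfun_inverse) (auto simp: bcontfun_def)
  qed
  have TS: "T ` S \<subseteq> S" using T S rhs_ext_in_trap by auto
  have contr: "dist (T G1) (T G2) \<le> 1/2 * dist G1 G2" if "G1 \<in> S" "G2 \<in> S" for G1 G2
  proof (rule dist_bound)
    fix p
    have "norm (rhs_ext G1 p - rhs_ext G2 p) \<le> dist G1 G2 / 2"
    proof (rule norm_rhs_ext_diff_le)
      show "norm (apply_bcontfun G1 q - apply_bcontfun G2 q) \<le> dist G1 G2" for q
        using dist_bounded[of G1 q G2] by (simp add: dist_norm)
    qed (use that S in auto)
    then show "dist (T G1 p) (T G2 p) \<le> 1/2 * dist G1 G2"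
      using T[OF that(1)] T[OF that(2)] by (simp add: dist_norm)
  qed
  have "complete S"
    unfolding S_def complete_eq_closed by (rule closed_PiC) (simp add: trap_def closed_cbox)
  moreover have "const_bcontfun 0 \<in> S"
    using forcing_max_pos by (simp add: S mem_trap)
  ultimately obtain G where G: "G \<in> S" "T G = G"
    using Banach_fix[of S "1/2" T, OF _ _ _ _ TS contr] by auto
  show ?thesis
  proof (rule that[of "apply_bcontfun G"])
    show "apply_bcontfun G p = rhs_ext (apply_bcontfun G) p" for p
      using T[OF G(1)] G(2) by metis
  qed (use G(1) S in auto)
qed

lemma exists_admissible_solution: "\<exists>H. admissible \<Lambda> H \<and> solves D b \<beta> \<Lambda> H"
proof -
  obtain H where H: "continuous_on UNIV H" "\<And>p. H p \<in> trap" "\<And>p. H p = rhs_ext H p"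
    using exists_fixed_point by blast
  have "admissible \<Lambda> H"
    using H(1,2) mem_trap unfolding admissible_def by (auto intro: continuous_on_subset)
  moreover have "H (\<theta>, l) = rhs H \<theta> l" if "(\<theta>, l) \<in> Dom \<Lambda>" for \<theta> l
    using trans[OF H(3) rhs_ext_eq] that by (simp add: Dom_def)
  then have "solves D b \<beta> \<Lambda> H"
    unfolding solves_iff_fixed_point using integrand_integrable[OF H(1,2)] by blast
  ultimately show ?thesis by blast
qed

lemma admissible_solution_in_trap:
  assumes "admissible \<Lambda> H" "solves D b \<beta> \<Lambda> H" "(\<theta>, l) \<in> Dom \<Lambda>"
  shows "H (\<theta>, l) \<in> trap"
proof -
  have nonneg: "0 \<le> H q $ i" if "q \<in> Dom \<Lambda>" for q i
    using assms(1) that by (simp add: admissible_def)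
  from assms(3) have bounds: "0 < \<theta>" "\<theta> \<le> \<Lambda>" "0 < l" "l \<le> 1" by (auto simp: Dom_def)
  have int: "integrand H \<theta> l integrable_on {0..1}" and eq: "H (\<theta>, l) = rhs H \<theta> l"
    using assms(2,3) by (auto simp: solves_iff_fixed_point)
  have "H (\<theta>, l) $ i \<le> forcing_max" for i
    unfolding eq
  proof (rule rhs_component_le_forcing_max[OF _ _ _ _ int])
    show "0 \<le> H (\<theta> * (1 - y), l) $ j" if "0 \<le> y" "y < 1" for y j
      by (rule nonneg[OF Dom_segment[OF assms(3) that]])
  qed (use bounds Lambda_le_1 in auto)
  then show ?thesis using nonneg[OF assms(3)] by (simp add: mem_trap)
qed

lemma admissible_solutions_unique:
  assumes "admissible \<Lambda> H1" "solves D b \<beta> \<Lambda> H1" "admissible \<Lambda> H2" "solves D b \<beta> \<Lambda> H2"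
    and "p \<in> Dom \<Lambda>"
  shows "H1 p = H2 p"
proof -
  have trap: "H1 q \<in> trap" "H2 q \<in> trap" if "q \<in> Dom \<Lambda>" for q
    using admissible_solution_in_trap[of _ "fst q" "snd q"] assms(1-4) that by simp_all
  define \<delta> where "\<delta> = (SUP q\<in>Dom \<Lambda>. norm (H1 q - H2 q))"
  have "norm (H1 q - H2 q) \<le> 2 * forcing_max + 2 * forcing_max" if "q \<in> Dom \<Lambda>" for q
    using norm_triangle_ineq4[of "H1 q" "H2 q"] norm_le_if_mem_trap[OF trap(1)[OF that]]
      norm_le_if_mem_trap[OF trap(2)[OF that]] by linarith
  then have le_\<delta>: "norm (H1 q - H2 q) \<le> \<delta>" if "q \<in> Dom \<Lambda>" for q
    unfolding \<delta>_def using that by (intro cSUP_upper bdd_aboveI2) auto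
  have half: "norm (H1 q - H2 q) \<le> \<delta> / 2" if "q \<in> Dom \<Lambda>" for q
  proof -
    obtain \<theta> l where q: "q = (\<theta>, l)" by fastforce
    have \<theta>: "0 \<le> \<theta>" "\<theta> \<le> \<Lambda>" using that q by (auto simp: Dom_def)
    have fp: "integrand H1 \<theta> l integrable_on {0..1}" "H1 (\<theta>, l) = rhs H1 \<theta> l"
      "integrand H2 \<theta> l integrable_on {0..1}" "H2 (\<theta>, l) = rhs H2 \<theta> l"
      using assms(2,4) that q by (auto simp: solves_iff_fixed_point)
    have seg: "(\<theta> * (1 - y), l) \<in> Dom \<Lambda>" if "0 \<le> y" "y < 1" for y
      using Dom_segment that \<open>q \<in> Dom \<Lambda>\<close> q by blast
    have "norm (rhs H1 \<theta> l - rhs H2 \<theta> l) \<le> \<delta> / 2"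
      by (rule norm_rhs_diff_le[OF \<theta> fp(1) fp(3)]) (use seg trap le_\<delta> in auto)
    then show ?thesis using q fp(2,4) by simp
  qed
  have "(SUP q\<in>Dom \<Lambda>. norm (H1 q - H2 q)) \<le> \<delta> / 2"
    using assms(5) half by (intro cSUP_least) auto
  then have "\<delta> \<le> \<delta> / 2" by (simp add: \<delta>_def)
  moreover have "0 \<le> \<delta>" using order_trans[OF norm_ge_zero le_\<delta>[OF assms(5)]] .
  ultimately show ?thesis using le_\<delta>[OF assms(5)] by simp
qed

end

theorem lemma9:
  fixes D :: "real^2^2" and b :: "2 \<Rightarrow> 2 \<Rightarrow> 2 \<Rightarrow> real" and \<beta> :: real
  assumes "\<forall>i j. 0 < D $ i $ j"
    and "\<forall>i j k. 0 \<le> b i j k"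
    and "\<forall>i j k. b i j k = b i k j"
    and "1/2 < \<beta>" and "\<beta> \<le> 1"
  shows "\<exists>\<Lambda>>0. \<exists>H. admissible \<Lambda> H \<and> solves D b \<beta> \<Lambda> H \<and>
           (\<forall>H'. admissible \<Lambda> H' \<and> solves D b \<beta> \<Lambda> H' \<longrightarrow> (\<forall>p \<in> Dom \<Lambda>. H' p = H p))"
proof -
  interpret volterra_system D b \<beta>
    using assms by unfold_locales auto
  obtain \<Lambda> where \<Lambda>: "0 < \<Lambda>" "\<Lambda> \<le> 1"
    "\<And>\<theta>. 0 \<le> \<theta> \<Longrightarrow> \<theta> \<le> \<Lambda> \<Longrightarrow> lip_rhs \<theta> \<le> 1/2"
    "\<And>\<theta>. 0 \<le> \<theta> \<Longrightarrow> \<theta> \<le> \<Lambda> \<Longrightarrow> lip_rhs \<theta> * (2 * forcing_max) \<le> forcing_min"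
    using exists_small_domain by blast
  interpret volterra_small D b \<beta> \<Lambda>
    using \<Lambda> by unfold_locales auto
  obtain H where "admissible \<Lambda> H" "solves D b \<beta> \<Lambda> H"
    using exists_admissible_solution by blast
  then show ?thesis
    using \<Lambda>(1) admissible_solutions_unique by blast
qed

end
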